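(* Let $z\in\mathbb{R}_{\ge0}^s$ with $\sum_j z_j>0$ and $\eta>0$, let $S=\{j: z_j>0\}$, and for $j\in S$ let $g_j=\frac{1}{(\sum_l z_l)^2}\sum_k z_k\log\frac{z_k}{z_j}$. Let $\tilde z_j=\max(z_j-\eta g_j,0)$ for $j\in S$ and $\tilde z_j=0$ for $j\notin S$. Suppose that a smallest non-zero entry $z_{i_0}$ of $z$ satisfies $\tilde z_{i_0}>0$. Then for every $i\in S$, $$\frac{\tilde z_i}{\sum_j\tilde z_j}-\frac{z_i}{\sum_j z_j}=\frac{z_i-\eta g_i}{\sum_{j\in S}(z_j-\eta g_j)}-\frac{z_i}{\sum_j z_j}=\frac{\eta}{c}\Big[z_i\sum_{j\in S}g_j-\Big(\sum_j z_j\Big)g_i\Big],$$ where $c=\big(\sum_j z_j\big)\big(\sum_{j\in S}(z_j-\eta g_j)\big)>0$ does not depend on $i$.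
   Context: $g_j$ is the partial derivative with respect to $z_j$ of the entropy $\mathcal{H}(z)=-\sum_i \frac{z_i}{\sum_l z_l}\log\frac{z_i}{\sum_l z_l}$ (convention $0\log0=0$, so terms with $z_k=0$ contribute $0$). *)

theory Defs
  imports Complex_Main
begin

text \<open>Vectors z in R^s are functions on a finite index type 'n (s = CARD('n)).\<close>

definition supp_pos :: "('n::finite \<Rightarrow> real) \<Rightarrow> 'n set" where
  "supp_pos z = {j. z j > 0}"

text \<open>g_j = (1/(sum_l z_l)^2) * sum_k z_k log(z_k/z_j); terms with z_k = 0 vanish
  since they are multiplied by z_k = 0 (the 0 log 0 = 0 convention).\<close>
definition gval :: "('n::finite \<Rightarrow> real) \<Rightarrow> 'n \<Rightarrow> real" where
  "gval z j = (1 / (\<Sum>l\<in>UNIV. z l)^2) * (\<Sum>k\<in>UNIV. z k * ln (z k / z j))"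

definition ztil :: "real \<Rightarrow> ('n::finite \<Rightarrow> real) \<Rightarrow> 'n \<Rightarrow> real" where
  "ztil \<eta> z j = (if j \<in> supp_pos z then max (z j - \<eta> * gval z j) 0 else 0)"

end

theory Submission
  imports Defs
begin

text \<open>Since \<open>g\<^sub>j = (\<Sum>\<^sub>k z\<^sub>k log z\<^sub>k - Z log z\<^sub>j) / Z\<^sup>2\<close> with \<open>Z = \<Sum>\<^sub>l z\<^sub>l\<close>, the
  gradient is antitone in \<open>z\<^sub>j\<close> on the support, so \<open>z\<^sub>j - \<eta> g\<^sub>j\<close> is monotone in \<open>z\<^sub>j\<close> there.
  Hence if the step stays positive at a smallest positive entry, no clipping happens on the
  support, the normalising sum is \<open>Z - \<eta> \<Sum>\<^sub>S g\<^sub>j\<close>, and the identity is plain algebra.\<close>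

lemma gval_eq:
  fixes z :: "'n::finite \<Rightarrow> real"
  assumes nonneg: "\<And>k. z k \<ge> 0" and "z j > 0"
  shows "gval z j = ((\<Sum>k\<in>UNIV. z k * ln (z k)) - (\<Sum>l\<in>UNIV. z l) * ln (z j)) / (\<Sum>l\<in>UNIV. z l)^2"
proof -
  have "z k * ln (z k / z j) = z k * ln (z k) - z k * ln (z j)" for k
  proof (cases "z k = 0")
    case False
    then have "z k > 0" using nonneg[of k] by simp
    then show ?thesis using \<open>z j > 0\<close> by (simp add: ln_div algebra_simps)
  qed simp
  then show ?thesis
    unfolding gval_def by (simp add: sum_subtractf sum_distrib_right)
qed

lemma gval_antimono:
  fixes z :: "'n::finite \<Rightarrow> real"
  assumes nonneg: "\<And>k. z k \<ge> 0" and "z i > 0" and "z i \<le> z j"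
  shows "gval z j \<le> gval z i"
proof -
  have "(\<Sum>l\<in>UNIV. z l) * ln (z i) \<le> (\<Sum>l\<in>UNIV. z l) * ln (z j)"
    using assms by (intro mult_left_mono sum_nonneg) auto
  then show ?thesis
    using assms by (simp add: gval_eq divide_right_mono)
qed

lemma gradient_step_mono:
  fixes z :: "'n::finite \<Rightarrow> real"
  assumes "\<And>k. z k \<ge> 0" and "\<eta> \<ge> 0" and "z i > 0" and "z i \<le> z j"
  shows "z i - \<eta> * gval z i \<le> z j - \<eta> * gval z j"
  using mult_left_mono[OF gval_antimono[OF assms(1,3,4)] \<open>\<eta> \<ge> 0\<close>] \<open>z i \<le> z j\<close> by linarith

lemma ztil_eq_on_supp_pos:
  fixes z :: "'n::finite \<Rightarrow> real"
  assumes nonneg: "\<And>k. z k \<ge> 0" and "\<eta> \<ge> 0"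
    and i0: "i0 \<in> supp_pos z" "z i0 = Min (z ` supp_pos z)" "ztil \<eta> z i0 > 0"
    and j: "j \<in> supp_pos z"
  shows "z j - \<eta> * gval z j > 0" and "ztil \<eta> z j = z j - \<eta> * gval z j"
proof -
  have "z i0 - \<eta> * gval z i0 > 0"
    using i0 by (auto simp: ztil_def)
  moreover have "z i0 - \<eta> * gval z i0 \<le> z j - \<eta> * gval z j"
    using i0 j by (intro gradient_step_mono[OF nonneg \<open>\<eta> \<ge> 0\<close>]) (auto simp: supp_pos_def)
  ultimately show "z j - \<eta> * gval z j > 0" by linarith
  then show "ztil \<eta> z j = z j - \<eta> * gval z j"
    using j by (simp add: ztil_def)
qed

lemma sum_supp_pos:
  fixes z :: "'n::finite \<Rightarrow> real"
  assumes "\<And>k. z k \<ge> 0"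
  shows "(\<Sum>j\<in>supp_pos z. z j) = (\<Sum>j\<in>UNIV. z j)"
  using assms
  by (intro sum.mono_neutral_left) (auto simp: supp_pos_def order.order_iff_strict)

lemma sum_ztil:
  fixes z :: "'n::finite \<Rightarrow> real"
  shows "(\<Sum>j\<in>UNIV. ztil \<eta> z j) = (\<Sum>j\<in>supp_pos z. ztil \<eta> z j)"
  by (intro sum.mono_neutral_right) (auto simp: ztil_def)

lemma diff_of_normalised_step:
  fixes x g Z G \<eta> :: "'a::field"
  assumes "Z \<noteq> 0" and "Z - \<eta> * G \<noteq> 0"
  shows "(x - \<eta> * g) / (Z - \<eta> * G) - x / Z = \<eta> / (Z * (Z - \<eta> * G)) * (x * G - Z * g)"
  using assms by (simp add: field_simps)

theorem corollary9:
  fixes z :: "'n::finite \<Rightarrow> real" and \<eta> :: real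
  assumes nonneg: "\<And>j. z j \<ge> 0"
    and pos: "(\<Sum>j\<in>UNIV. z j) > 0"
    and eta: "\<eta> > 0"
    and smallest: "\<exists>i0\<in>supp_pos z. z i0 = Min (z ` supp_pos z) \<and> ztil \<eta> z i0 > 0"
  defines "c \<equiv> (\<Sum>j\<in>UNIV. z j) * (\<Sum>j\<in>supp_pos z. z j - \<eta> * gval z j)"
  shows "c > 0 \<and>
    (\<forall>i\<in>supp_pos z.
       ztil \<eta> z i / (\<Sum>j\<in>UNIV. ztil \<eta> z j) - z i / (\<Sum>j\<in>UNIV. z j)
         = (z i - \<eta> * gval z i) / (\<Sum>j\<in>supp_pos z. z j - \<eta> * gval z j) - z i / (\<Sum>j\<in>UNIV. z j)
     \<and> (z i - \<eta> * gval z i) / (\<Sum>j\<in>supp_pos z. z j - \<eta> * gval z j) - z i / (\<Sum>j\<in>UNIV. z j)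
         = \<eta> / c * (z i * (\<Sum>j\<in>supp_pos z. gval z j) - (\<Sum>j\<in>UNIV. z j) * gval z i))"
proof -
  obtain i0 where i0: "i0 \<in> supp_pos z" "z i0 = Min (z ` supp_pos z)" "ztil \<eta> z i0 > 0"
    using smallest by blast
  note step = ztil_eq_on_supp_pos[OF nonneg less_imp_le[OF eta] i0]
  define D where "D = (\<Sum>j\<in>supp_pos z. z j - \<eta> * gval z j)"
  have "D > 0"
    unfolding D_def using step(1) i0(1) by (intro sum_pos) auto
  have sum_ztil_eq: "(\<Sum>j\<in>UNIV. ztil \<eta> z j) = D"
    unfolding sum_ztil D_def using step(2) by (rule sum.cong[OF refl])
  have D_eq: "D = (\<Sum>j\<in>UNIV. z j) - \<eta> * (\<Sum>j\<in>supp_pos z. gval z j)"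
    unfolding D_def by (simp add: sum_subtractf sum_distrib_left sum_supp_pos[OF nonneg])
  have "c > 0"
    using pos \<open>D > 0\<close> unfolding c_def D_def[symmetric] by simp
  moreover have "(z i - \<eta> * gval z i) / D - z i / (\<Sum>j\<in>UNIV. z j)
      = \<eta> / c * (z i * (\<Sum>j\<in>supp_pos z. gval z j) - (\<Sum>j\<in>UNIV. z j) * gval z i)" for i
    using diff_of_normalised_step[of "\<Sum>j\<in>UNIV. z j"] pos \<open>D > 0\<close>
    unfolding c_def D_def[symmetric] D_eq by simp
  ultimately show ?thesis
    using step(2) sum_ztil_eq unfolding D_def[symmetric] by simp
qed

end
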